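(* Let $\mathbf{y}\in\mathbb{R}^n$ and $\mathbf{X}=(\mathbf{x}_1,\ldots,\mathbf{x}_p)\in\mathbb{R}^{n\times p}$ satisfy $\sum_{i=1}^n y_i=0$, and for every $j=1,\ldots,p$, $\sum_{i=1}^n x_{ij}=0$ and $\frac1n\sum_{i=1}^n x_{ij}^2=1$. For $\lambda\ge 0$ let $$\widehat{\boldsymbol\beta}(\lambda)=\operatorname*{argmin}_{\boldsymbol\beta\in\mathbb{R}^p}\ \frac{1}{2n}\|\mathbf{y}-\mathbf{X}\boldsymbol\beta\|^2+\lambda\|\boldsymbol\beta\|_1 .$$ Let $\lambda_m=\max_j|\mathbf{x}_j^T\mathbf{y}/n|$ and let $\mathbf{x}_*=\operatorname*{argmax}_{\mathbf{x}_j}|\mathbf{x}_j^T\mathbf{y}|$. Then for any $\lambda\in(0,\lambda_m]$ and any $j$, we have $\widehat{\beta}_j(\lambda)=0$ if $$\left|(\lambda_m+\lambda)\mathbf{x}_j^T\mathbf{y}-(\lambda_m-\lambda)\,\mathrm{sign}(\mathbf{x}_*^T\mathbf{y})\,\lambda_m\,\mathbf{x}_j^T\mathbf{x}_*\right|<2n\lambda\lambda_m-(\lambda_m-\lambda)\sqrt{n\|\mathbf{y}\|^2-n^2\lambda_m^2}.$$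
   Context: $\|\cdot\|$ is the Euclidean norm and $\|\cdot\|_1$ the $\ell_1$ norm. $\widehat{\beta}_j(\lambda)$ denotes the $j$th coordinate of the lasso solution $\widehat{\boldsymbol\beta}(\lambda)$. *)

theory Defs
  imports "HOL-Analysis.Analysis"
begin

text \<open>Observations are indexed by the finite type 'n (n = CARD('n)), predictors by 'p.
  X :: real^'p^'n is the n x p design matrix; column j X is the predictor x_j.\<close>

definition l1norm :: "real^'p \<Rightarrow> real" where
  "l1norm b = (\<Sum>j\<in>UNIV. \<bar>b $ j\<bar>)"

definition lasso_obj :: "real^'p^'n \<Rightarrow> real^'n \<Rightarrow> real \<Rightarrow> real^'p \<Rightarrow> real" where
  "lasso_obj X y lam b =
     1 / (2 * real CARD('n)) * (norm (y - X *v b))\<^sup>2 + lam * l1norm b"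

definition is_lasso_sol :: "real^'p^'n \<Rightarrow> real^'n \<Rightarrow> real \<Rightarrow> real^'p \<Rightarrow> bool" where
  "is_lasso_sol X y lam b \<longleftrightarrow> (\<forall>c. lasso_obj X y lam b \<le> lasso_obj X y lam c)"

definition lambda_max :: "real^'p^'n \<Rightarrow> real^'n \<Rightarrow> real" where
  "lambda_max X y = Max (range (\<lambda>j. \<bar>column j X \<bullet> y / real CARD('n)\<bar>))"

end

theory Submission
  imports Defs
begin

text \<open>By the optimality conditions, \<open>\<theta> = (y - X b) / (n \<lambda>)\<close> lies in the dual polytope
  \<open>{\<theta>. \<forall>k. \<bar>x\<^sub>k \<bullet> \<theta>\<bar> \<le> 1}\<close>, is the projection of \<open>y / (n \<lambda>)\<close> onto it, and \<open>b\<^sub>j = 0\<close>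
  as soon as \<open>\<bar>x\<^sub>j \<bullet> \<theta>\<bar> < 1\<close>. The point \<open>\<theta>\<^sub>m = y / (n \<lambda>\<^sub>m)\<close> is dual feasible and sits on
  the face \<open>u \<bullet> \<theta> = 1\<close> with \<open>u = sgn (x\<^sub>* \<bullet> y) x\<^sub>*\<close>. The projection inequality towards \<open>\<theta>\<^sub>m\<close>
  together with \<open>u \<bullet> \<theta> \<le> 1\<close> confines \<open>\<theta>\<close> to an explicit ball, and the screening rule says
  precisely that \<open>\<bar>x\<^sub>j \<bullet> \<theta>\<bar> < 1\<close> on the whole ball.\<close>

lemma nonneg_if_quadratic_nonneg_near_zero:
  fixes c q d :: real
  assumes "0 < d" and nonneg: "\<And>t. 0 < t \<Longrightarrow> t < d \<Longrightarrow> 0 \<le> t * c + t\<^sup>2 * q"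
  shows "0 \<le> c"
proof (rule ccontr)
  assume "\<not> 0 \<le> c"
  hence c: "c < 0" by simp
  define t where "t = min (d / 2) (- c / (2 * (\<bar>q\<bar> + 1)))"
  have "0 < - c / (2 * (\<bar>q\<bar> + 1))" using c by (intro divide_pos_pos) auto
  hence t: "0 < t" "t < d" using \<open>0 < d\<close> by (auto simp: t_def)
  have "t * q \<le> t * (\<bar>q\<bar> + 1)" using t by (intro mult_left_mono) auto
  also have "\<dots> \<le> (- c / (2 * (\<bar>q\<bar> + 1))) * (\<bar>q\<bar> + 1)"
    by (intro mult_right_mono) (auto simp: t_def)
  also have "\<dots> = - c / 2" by (simp add: field_simps)
  finally have "t * (c + t * q) < 0" using c t by (intro mult_pos_neg) auto
  with nonneg[OF t] show False by (simp add: algebra_simps power2_eq_square)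
qed

lemma matrix_vector_mult_inner_columns:
  fixes X :: "real^'p^'n"
  shows "(X *v b) \<bullet> z = (\<Sum>k\<in>UNIV. b $ k * (column k X \<bullet> z))"
  unfolding matrix_mult_sum by (simp add: inner_sum_left scalar_mult_eq_scaleR)

lemma l1norm_add_axis:
  "l1norm (b + t *\<^sub>R axis k 1) = l1norm b + (\<bar>b $ k + t\<bar> - \<bar>b $ k\<bar>)"
proof -
  have "l1norm (b + t *\<^sub>R axis k 1) = \<bar>b $ k + t\<bar> + (\<Sum>i\<in>UNIV - {k}. \<bar>b $ i\<bar>)"
    unfolding l1norm_def by (subst sum.remove[of UNIV k]) (auto simp: axis_def intro!: sum.cong)
  moreover have "l1norm b = \<bar>b $ k\<bar> + (\<Sum>i\<in>UNIV - {k}. \<bar>b $ i\<bar>)"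
    unfolding l1norm_def by (subst sum.remove[of UNIV k]) auto
  ultimately show ?thesis by simp
qed

lemma lasso_coordinate_step:
  fixes X :: "real^'p^'n"
  assumes "is_lasso_sol X y lam b"
  shows "0 \<le> - 2 * t * (column k X \<bullet> (y - X *v b)) + t\<^sup>2 * (norm (column k X))\<^sup>2
            + 2 * real CARD('n) * lam * (\<bar>b $ k + t\<bar> - \<bar>b $ k\<bar>)"
proof -
  let ?N = "real CARD('n)" and ?r = "y - X *v b" and ?x = "column k X"
  have "X *v (b + t *\<^sub>R axis k 1) = X *v b + t *\<^sub>R ?x"
    by (simp add: matrix_vector_right_distrib matrix_vector_mult_scaleR matrix_vector_mult_basis)
  hence step: "y - X *v (b + t *\<^sub>R axis k 1) = ?r - t *\<^sub>R ?x" by simp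
  have expand: "(norm (?r - t *\<^sub>R ?x))\<^sup>2 = (norm ?r)\<^sup>2 - 2 * t * (?x \<bullet> ?r) + t\<^sup>2 * (norm ?x)\<^sup>2"
    unfolding power2_norm_eq_inner
    by (simp add: inner_diff_left inner_diff_right inner_commute algebra_simps power2_eq_square)
  have "lasso_obj X y lam b \<le> lasso_obj X y lam (b + t *\<^sub>R axis k 1)"
    using assms unfolding is_lasso_sol_def by blast
  hence "0 \<le> 1 / (2 * ?N) * (- 2 * t * (?x \<bullet> ?r) + t\<^sup>2 * (norm ?x)\<^sup>2)
                + lam * (\<bar>b $ k + t\<bar> - \<bar>b $ k\<bar>)"
    unfolding lasso_obj_def l1norm_add_axis step expand by (simp add: algebra_simps)
  hence "0 \<le> 2 * ?N * (1 / (2 * ?N) * (- 2 * t * (?x \<bullet> ?r) + t\<^sup>2 * (norm ?x)\<^sup>2)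
                       + lam * (\<bar>b $ k + t\<bar> - \<bar>b $ k\<bar>))"
    by simp
  thus ?thesis by (simp add: algebra_simps)
qed

lemma lasso_directional_optimality:
  fixes X :: "real^'p^'n"
  assumes sol: "is_lasso_sol X y lam b" and lam: "0 \<le> lam" and "0 < d"
    and l1_slope: "\<And>t. 0 < t \<Longrightarrow> t < d \<Longrightarrow> \<bar>b $ k + \<sigma> * t\<bar> - \<bar>b $ k\<bar> \<le> \<rho> * t"
  shows "\<sigma> * (column k X \<bullet> (y - X *v b)) \<le> real CARD('n) * lam * \<rho>"
proof -
  let ?N = "real CARD('n)" and ?a = "column k X \<bullet> (y - X *v b)"
  let ?q = "\<sigma>\<^sup>2 * (norm (column k X))\<^sup>2"
  have "0 \<le> t * (2 * (?N * lam * \<rho> - \<sigma> * ?a)) + t\<^sup>2 * ?q" if t: "0 < t" "t < d" for t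
  proof -
    have "2 * ?N * lam * (\<bar>b $ k + \<sigma> * t\<bar> - \<bar>b $ k\<bar>) \<le> 2 * ?N * lam * (\<rho> * t)"
      using l1_slope[OF t] lam by (intro mult_left_mono) auto
    with lasso_coordinate_step[OF sol, of "\<sigma> * t" k] show ?thesis
      by (simp add: algebra_simps power_mult_distrib)
  qed
  hence "0 \<le> 2 * (?N * lam * \<rho> - \<sigma> * ?a)"
    using nonneg_if_quadratic_nonneg_near_zero[OF \<open>0 < d\<close>] by blast
  thus ?thesis by simp
qed

lemma lasso_kkt_bound:
  fixes X :: "real^'p^'n"
  assumes sol: "is_lasso_sol X y lam b" and lam: "0 \<le> lam"
  shows "\<bar>column k X \<bullet> (y - X *v b)\<bar> \<le> real CARD('n) * lam"
proof -
  have "\<sigma> * (column k X \<bullet> (y - X *v b)) \<le> real CARD('n) * lam * 1" if "\<bar>\<sigma>\<bar> = 1" for \<sigma>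
  proof (rule lasso_directional_optimality[OF sol lam zero_less_one])
    fix t :: real
    assume "0 < t"
    then show "\<bar>b $ k + \<sigma> * t\<bar> - \<bar>b $ k\<bar> \<le> 1 * t"
      using abs_triangle_ineq[of "b $ k" "\<sigma> * t"] that by (simp add: abs_mult)
  qed
  from this[of 1] this[of "-1"] show ?thesis by simp
qed

lemma lasso_kkt_active:
  fixes X :: "real^'p^'n"
  assumes sol: "is_lasso_sol X y lam b" and lam: "0 \<le> lam" and nz: "b $ k \<noteq> 0"
  shows "column k X \<bullet> (y - X *v b) = real CARD('n) * lam * sgn (b $ k)"
proof -
  let ?a = "column k X \<bullet> (y - X *v b)" and ?s = "sgn (b $ k)"
  have d: "0 < \<bar>b $ k\<bar>" using nz by simp
  have "?s * ?a \<le> real CARD('n) * lam * 1"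
    using nz by (intro lasso_directional_optimality[OF sol lam d]) (auto simp: sgn_if)
  moreover have "- ?s * ?a \<le> real CARD('n) * lam * (-1)"
    using nz by (intro lasso_directional_optimality[OF sol lam d]) (auto simp: sgn_if)
  ultimately have "?s * ?a = real CARD('n) * lam" by linarith
  hence "?s * (?s * ?a) = ?s * (real CARD('n) * lam)" by simp
  thus ?thesis using nz by (simp add: sgn_mult_self_eq)
qed

lemma lasso_fit_inner_residual:
  fixes X :: "real^'p^'n"
  assumes "is_lasso_sol X y lam b" and "0 \<le> lam"
  shows "(X *v b) \<bullet> (y - X *v b) = real CARD('n) * lam * l1norm b"
proof -
  have "b $ k * (column k X \<bullet> (y - X *v b)) = real CARD('n) * lam * \<bar>b $ k\<bar>" for k
    using lasso_kkt_active[OF assms, of k] by (cases "b $ k = 0") (auto simp: abs_sgn)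
  thus ?thesis
    unfolding matrix_vector_mult_inner_columns l1norm_def by (simp add: sum_distrib_left)
qed

lemma matrix_vector_mult_inner_le_l1norm:
  fixes X :: "real^'p^'n"
  assumes "\<And>k. \<bar>column k X \<bullet> z\<bar> \<le> c"
  shows "(X *v b) \<bullet> z \<le> c * l1norm b"
  unfolding matrix_vector_mult_inner_columns l1norm_def sum_distrib_left
proof (rule sum_mono)
  fix k
  have "b $ k * (column k X \<bullet> z) \<le> \<bar>b $ k\<bar> * \<bar>column k X \<bullet> z\<bar>"
    by (metis abs_ge_self abs_mult)
  also have "\<dots> \<le> \<bar>b $ k\<bar> * c" using assms by (intro mult_left_mono) auto
  finally show "b $ k * (column k X \<bullet> z) \<le> c * \<bar>b $ k\<bar>" by (simp add: mult.commute)
qed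

lemma lasso_screening:
  fixes X :: "real^'p^'n"
  assumes "is_lasso_sol X y lam b" and "0 \<le> lam"
    and "\<bar>column j X \<bullet> (y - X *v b)\<bar> < real CARD('n) * lam"
  shows "b $ j = 0"
proof (rule ccontr)
  assume "b $ j \<noteq> 0"
  hence "\<bar>column j X \<bullet> (y - X *v b)\<bar> = real CARD('n) * lam"
    using lasso_kkt_active[OF assms(1,2)] assms(2) by (simp add: abs_mult)
  with assms(3) show False by simp
qed

lemma projection_in_ball:
  fixes v \<theta> t u :: "'a::real_inner" and \<mu> :: real
  assumes proj: "(v - \<theta>) \<bullet> (t - \<theta>) \<le> 0" and halfspace: "u \<bullet> \<theta> \<le> u \<bullet> t" and "0 \<le> \<mu>"
    and w: "w = v - t - \<mu> *\<^sub>R u"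
  shows "norm (\<theta> - (t + (1/2) *\<^sub>R w)) \<le> norm w / 2"
proof -
  define d where "d = \<theta> - t"
  have "d \<bullet> d \<le> (v - t) \<bullet> d"
    using proj unfolding d_def by (simp add: inner_diff_left inner_diff_right inner_commute)
  also have "\<dots> = w \<bullet> d + \<mu> * (u \<bullet> d)" unfolding w by (simp add: inner_diff_left)
  also have "\<dots> \<le> w \<bullet> d"
    using halfspace \<open>0 \<le> \<mu>\<close> unfolding d_def by (simp add: inner_diff_right mult_nonneg_nonpos)
  finally have "d \<bullet> d \<le> w \<bullet> d" .
  have "(norm (d - (1/2) *\<^sub>R w))\<^sup>2 = d \<bullet> d - w \<bullet> d + (norm w)\<^sup>2 / 4"
    unfolding power2_norm_eq_inner
    by (simp add: inner_diff_left inner_diff_right inner_commute algebra_simps)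
  also have "\<dots> \<le> (norm w / 2)\<^sup>2" using \<open>d \<bullet> d \<le> w \<bullet> d\<close> by (simp add: power_divide)
  finally have "(norm (d - (1/2) *\<^sub>R w))\<^sup>2 \<le> (norm w / 2)\<^sup>2" .
  hence "norm (d - (1/2) *\<^sub>R w) \<le> norm w / 2" by (rule power2_le_imp_le) simp
  thus ?thesis unfolding d_def by (simp add: algebra_simps)
qed

text \<open>The variational inequality characterising \<open>r / (n \<lambda>)\<close> as the projection of \<open>y / (n \<lambda>)\<close>
  onto the dual polytope, tested against the dual feasible point \<open>y / c\<close>.\<close>

lemma lasso_dual_projection:
  fixes X :: "real^'p^'n"
  assumes sol: "is_lasso_sol X y lam b" and lam: "0 < lam"
    and feasible: "\<And>k. \<bar>column k X \<bullet> y\<bar> \<le> c"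
  defines "\<theta> \<equiv> (1 / (real CARD('n) * lam)) *\<^sub>R (y - X *v b)"
  shows "((1 / (real CARD('n) * lam)) *\<^sub>R y - \<theta>) \<bullet> ((1 / c) *\<^sub>R y - \<theta>) \<le> 0"
proof -
  let ?N = "real CARD('n)"
  have "0 \<le> c" using feasible order_trans abs_ge_zero by blast
  have "\<bar>column k X \<bullet> ((1 / c) *\<^sub>R y)\<bar> \<le> 1" for k
    using feasible[of k] \<open>0 \<le> c\<close> by (cases "c = 0") (auto simp: abs_mult divide_le_eq_1)
  hence "(X *v b) \<bullet> ((1 / c) *\<^sub>R y) \<le> 1 * l1norm b"
    by (rule matrix_vector_mult_inner_le_l1norm)
  moreover have "(X *v b) \<bullet> \<theta> = l1norm b"
    using lasso_fit_inner_residual[OF sol] lam unfolding \<theta>_def by simp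
  ultimately have "(X *v b) \<bullet> ((1 / c) *\<^sub>R y - \<theta>) \<le> 0"
    by (simp only: inner_diff_right)
  moreover have "(1 / (?N * lam)) *\<^sub>R y - \<theta> = (1 / (?N * lam)) *\<^sub>R (X *v b)"
    unfolding \<theta>_def by (simp add: algebra_simps)
  ultimately show ?thesis using lam by (simp add: divide_nonpos_pos)
qed

lemma lasso_dual_ball:
  fixes X :: "real^'p^'n"
  defines "N \<equiv> real CARD('n)"
  assumes sol: "is_lasso_sol X y lam b" and lam: "0 < lam" "lam \<le> L"
    and feasible: "\<And>k. \<bar>column k X \<bullet> y\<bar> \<le> N * L"
    and face: "u \<bullet> y = N * L" and u_feasible: "u \<bullet> (y - X *v b) \<le> N * lam"
  defines "\<theta> \<equiv> (1 / (N * lam)) *\<^sub>R (y - X *v b)"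
    and "\<alpha> \<equiv> 1 / (N * lam) - 1 / (N * L)"
  shows "norm (\<theta> - ((1 / (N * L)) *\<^sub>R y + (1/2) *\<^sub>R (\<alpha> *\<^sub>R y - (\<alpha> * L) *\<^sub>R u)))
           \<le> norm (\<alpha> *\<^sub>R y - (\<alpha> * L) *\<^sub>R u) / 2"
proof (rule projection_in_ball)
  have N: "0 < N" and L: "0 < L" using lam by (auto simp: N_def)
  show "((1 / (N * lam)) *\<^sub>R y - \<theta>) \<bullet> ((1 / (N * L)) *\<^sub>R y - \<theta>) \<le> 0"
    using lasso_dual_projection[OF sol lam(1) feasible] unfolding \<theta>_def N_def .
  show "u \<bullet> \<theta> \<le> u \<bullet> ((1 / (N * L)) *\<^sub>R y)"
    using u_feasible face N lam L by (simp add: \<theta>_def divide_le_eq)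
  show "0 \<le> \<alpha> * L" using N L lam by (simp add: \<alpha>_def frac_le)
  show "\<alpha> *\<^sub>R y - (\<alpha> * L) *\<^sub>R u
          = (1 / (N * lam)) *\<^sub>R y - (1 / (N * L)) *\<^sub>R y - (\<alpha> * L) *\<^sub>R u"
    by (simp add: \<alpha>_def scaleR_diff_left)
qed

lemma inner_lt_one_on_dual_ball:
  fixes x u y \<theta> :: "'a::real_inner" and N lam L :: real
  assumes N: "0 < N" and lam: "0 < lam" "lam \<le> L"
    and nx: "(norm x)\<^sup>2 = N" and uu: "u \<bullet> u = N" and uy: "u \<bullet> y = N * L"
  defines "\<alpha> \<equiv> 1 / (N * lam) - 1 / (N * L)"
  defines "w \<equiv> \<alpha> *\<^sub>R y - (\<alpha> * L) *\<^sub>R u"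
  assumes ball: "norm (\<theta> - ((1 / (N * L)) *\<^sub>R y + (1/2) *\<^sub>R w)) \<le> norm w / 2"
    and rule: "\<bar>(L + lam) * (x \<bullet> y) - (L - lam) * L * (x \<bullet> u)\<bar>
                < 2 * N * lam * L - (L - lam) * sqrt (N * (norm y)\<^sup>2 - N\<^sup>2 * L\<^sup>2)"
  shows "\<bar>x \<bullet> \<theta>\<bar> < 1"
proof -
  define c where "c = (1 / (N * L)) *\<^sub>R y + (1/2) *\<^sub>R w"
  define Y where "Y = (norm y)\<^sup>2 - N * L\<^sup>2"
  have L: "0 < L" using lam by simp
  have \<alpha>: "0 \<le> \<alpha>" unfolding \<alpha>_def using N lam by (simp add: frac_le mult_left_mono)
  have scale: "N * lam * L * \<alpha> = L - lam" unfolding \<alpha>_def using N lam L by (simp add: field_simps)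
  have "(norm w)\<^sup>2 = \<alpha>\<^sup>2 * Y"
    unfolding power2_norm_eq_inner w_def Y_def
    by (simp add: inner_diff_left inner_diff_right inner_commute uu uy algebra_simps power2_eq_square)
  hence norm_w: "norm w = \<alpha> * sqrt Y"
    by (metis \<alpha> norm_ge_zero real_sqrt_abs real_sqrt_mult abs_of_nonneg real_sqrt_unique)
  have "\<bar>x \<bullet> \<theta>\<bar> \<le> \<bar>x \<bullet> c\<bar> + \<bar>x \<bullet> (\<theta> - c)\<bar>"
    using abs_triangle_ineq[of "x \<bullet> c" "x \<bullet> (\<theta> - c)"] by (simp add: inner_diff_right)
  also have "\<bar>x \<bullet> (\<theta> - c)\<bar> \<le> norm x * norm (\<theta> - c)" by (rule Cauchy_Schwarz_ineq2)
  also have "\<dots> \<le> sqrt N * (\<alpha> * sqrt Y / 2)"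
    using ball nx unfolding c_def norm_w[symmetric] by (intro mult_mono) (auto simp: real_sqrt_unique)
  finally have bound: "\<bar>x \<bullet> \<theta>\<bar> \<le> \<bar>x \<bullet> c\<bar> + sqrt N * (\<alpha> * sqrt Y / 2)" by simp
  have "x \<bullet> c = (x \<bullet> y) / (N * L) + (\<alpha> * (x \<bullet> y) - \<alpha> * L * (x \<bullet> u)) / 2"
    unfolding c_def w_def by (simp add: inner_add_right inner_diff_right field_simps)
  hence "2 * N * L * (x \<bullet> c) = 2 * (x \<bullet> y) + N * L * \<alpha> * ((x \<bullet> y) - L * (x \<bullet> u))"
    using N L by (simp add: field_simps)
  hence "2 * N * lam * L * (x \<bullet> c)
         = 2 * lam * (x \<bullet> y) + (N * lam * L * \<alpha>) * ((x \<bullet> y) - L * (x \<bullet> u))"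
    by (metis (no_types) ring_class.ring_distribs(1) mult.assoc mult.left_commute)
  hence center: "2 * N * lam * L * (x \<bullet> c) = (L + lam) * (x \<bullet> y) - (L - lam) * L * (x \<bullet> u)"
    unfolding scale by (simp add: algebra_simps)
  have "sqrt (N * (norm y)\<^sup>2 - N\<^sup>2 * L\<^sup>2) = sqrt N * sqrt Y"
    unfolding Y_def by (simp add: real_sqrt_mult[symmetric] algebra_simps power2_eq_square)
  hence radius: "2 * N * lam * L * (sqrt N * (\<alpha> * sqrt Y / 2))
                 = (L - lam) * sqrt (N * (norm y)\<^sup>2 - N\<^sup>2 * L\<^sup>2)"
    by (simp add: scale[symmetric] algebra_simps)
  have pos: "0 < 2 * N * lam * L" using N lam L by simp
  have "2 * N * lam * L * \<bar>x \<bullet> \<theta>\<bar> \<le> 2 * N * lam * L * (\<bar>x \<bullet> c\<bar> + sqrt N * (\<alpha> * sqrt Y / 2))"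
    using bound pos by (intro mult_left_mono) auto
  also have "\<dots> = \<bar>2 * N * lam * L * (x \<bullet> c)\<bar> + 2 * N * lam * L * (sqrt N * (\<alpha> * sqrt Y / 2))"
    using N lam L by (simp add: distrib_left abs_mult)
  also have "\<dots> < 2 * N * lam * L" unfolding center radius using rule by simp
  finally have "2 * N * lam * L * \<bar>x \<bullet> \<theta>\<bar> < 2 * N * lam * L * 1" by simp
  thus ?thesis using pos mult_less_cancel_left_pos by blast
qed

lemma abs_column_inner_le_lambda_max:
  fixes X :: "real^'p^'n"
  shows "\<bar>column k X \<bullet> y\<bar> \<le> real CARD('n) * lambda_max X y"
proof -
  have "\<bar>column k X \<bullet> y / real CARD('n)\<bar> \<le> lambda_max X y"
    unfolding lambda_max_def by (rule Max_ge) auto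
  thus ?thesis by (simp add: field_simps)
qed

lemma lambda_max_attained:
  fixes X :: "real^'p^'n"
  assumes "\<And>k. \<bar>column k X \<bullet> y\<bar> \<le> \<bar>column kstar X \<bullet> y\<bar>"
  shows "\<bar>column kstar X \<bullet> y\<bar> = real CARD('n) * lambda_max X y"
proof -
  have "lambda_max X y \<in> range (\<lambda>k. \<bar>column k X \<bullet> y / real CARD('n)\<bar>)"
    unfolding lambda_max_def by (rule Max_in) auto
  then obtain k where "lambda_max X y = \<bar>column k X \<bullet> y\<bar> / real CARD('n)" by auto
  hence "real CARD('n) * lambda_max X y \<le> \<bar>column kstar X \<bullet> y\<bar>" using assms[of k] by simp
  with abs_column_inner_le_lambda_max[of kstar X y] show ?thesis by linarith
qed

lemma norm_column_power2:
  fixes X :: "real^'p^'n"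
  shows "(norm (column k X))\<^sup>2 = (\<Sum>i\<in>UNIV. (X $ i $ k)\<^sup>2)"
  unfolding power2_norm_eq_inner by (simp add: inner_vec_def column_def power2_eq_square)

theorem theorem2p1:
  fixes y :: "real^'n" and X :: "real^'p^'n" and lam :: real and j kstar :: 'p
  assumes y_centered: "(\<Sum>i\<in>UNIV. y $ i) = 0"
    and X_centered: "\<And>k. (\<Sum>i\<in>UNIV. X $ i $ k) = 0"
    and X_scaled: "\<And>k. (1 / real CARD('n)) * (\<Sum>i\<in>UNIV. (X $ i $ k)\<^sup>2) = 1"
    and kstar_max: "\<And>k. \<bar>column k X \<bullet> y\<bar> \<le> \<bar>column kstar X \<bullet> y\<bar>"
    and lam_pos: "0 < lam" and lam_le: "lam \<le> lambda_max X y"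
    and rule: "\<bar>(lambda_max X y + lam) * (column j X \<bullet> y)
                 - (lambda_max X y - lam) * sgn (column kstar X \<bullet> y) * lambda_max X y
                     * (column j X \<bullet> column kstar X)\<bar>
             < 2 * real CARD('n) * lam * lambda_max X y
               - (lambda_max X y - lam) *
                   sqrt (real CARD('n) * (norm y)\<^sup>2 - (real CARD('n))\<^sup>2 * (lambda_max X y)\<^sup>2)"
    and sol: "is_lasso_sol X y lam b"
  shows "b $ j = 0"
proof -
  define N where "N = real CARD('n)"
  define L where "L = lambda_max X y"
  define u where "u = sgn (column kstar X \<bullet> y) *\<^sub>R column kstar X"
  define \<theta> where "\<theta> = (1 / (N * lam)) *\<^sub>R (y - X *v b)"
  have N: "0 < N" and L: "0 < L" using lam_pos lam_le by (auto simp: N_def L_def)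
  have norm_column: "(norm (column k X))\<^sup>2 = N" for k
    using X_scaled[of k] N unfolding norm_column_power2 N_def by (simp add: field_simps)
  have uy: "u \<bullet> y = N * L"
    using lambda_max_attained[OF kstar_max] unfolding u_def N_def L_def
    by (simp add: sgn_if abs_if split: if_splits)
  hence uu: "u \<bullet> u = N" using norm_column[of kstar] N L
    by (auto simp: u_def power2_norm_eq_inner sgn_if)
  have "u \<bullet> (y - X *v b) \<le> N * lam"
    using lasso_kkt_bound[OF sol, of kstar] lam_pos by (auto simp: u_def N_def sgn_if)
  from lasso_dual_ball[OF sol lam_pos lam_le abs_column_inner_le_lambda_max, of u, folded N_def L_def,
      OF uy this]
  have "\<bar>column j X \<bullet> \<theta>\<bar> < 1"
    using inner_lt_one_on_dual_ball[OF N lam_pos, of L "column j X" u y \<theta>] rule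
      norm_column uu uy lam_le
    by (simp add: u_def \<theta>_def N_def L_def algebra_simps)
  hence "\<bar>column j X \<bullet> (y - X *v b)\<bar> < N * lam"
    using N lam_pos by (simp add: \<theta>_def abs_mult divide_less_eq)
  thus ?thesis using lasso_screening[OF sol] lam_pos unfolding N_def by simp
qed

end
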